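(* Let $p$ be an odd prime with $p\equiv 1\pmod 4$ such that a perfect $B[-1,3](p)$ set exists. Then the multiplicative order of $-\tfrac23$ (i.e. of $-2\cdot 3^{-1}\bmod p$) in $\mathbb{Z}_p^\ast$ is odd.
   Context: $\mathbb{Z}_p^\ast$ is the multiplicative group of nonzero residues modulo $p$. A set $B\subseteq\mathbb{Z}_p$ is a perfect $B[-1,3](p)$ set if every nonzero element of $\mathbb{Z}_p$ has a unique representation $ab \bmod p$ with $a\in\{-1,1,2,3\}$ and $b\in B$ (and $0$ has no such representation); equivalently $B\subseteq\mathbb{Z}_p^\ast$, $|B|=(p-1)/4$, and the sets $\{-b,b,2b,3b\}$, $b\in B$, partition $\mathbb{Z}_p^\ast$. *)

theory Defs
  imports "HOL-Number_Theory.Number_Theory"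
begin

text \<open>Residues mod p are represented by the natural numbers 0..p-1.
  The multiplier set {-1,1,2,3} is taken as integers and products are reduced mod p.
  B is a perfect B[-1,3](p) set iff B is a set of residues and every residue
  x in {0..p-1} is represented as (a*b) mod p with a in {-1,1,2,3}, b in B,
  uniquely when x is nonzero, and not at all when x = 0.\<close>

definition perfect_B_m1_3 :: "nat \<Rightarrow> nat set \<Rightarrow> bool" where
  "perfect_B_m1_3 p B \<longleftrightarrow>
     B \<subseteq> {0..<p} \<and>
     (\<forall>x\<in>{1..<p}. \<exists>!(a, b). a \<in> {-1, 1, 2, 3::int} \<and> b \<in> B \<and> (a * int b) mod int p = int x) \<and>
     \<not> (\<exists>a\<in>{-1, 1, 2, 3::int}. \<exists>b\<in>B. (a * int b) mod int p = 0)"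

end

theory Submission
  imports Defs
begin

text \<open>Fix a primitive root modulo \<open>p\<close>, write \<open>p - 1 = 2^(k+1) m\<close> with \<open>m\<close> odd, and let \<open>N q\<close>
  count the \<open>b \<in> B\<close> whose index is congruent to \<open>q\<close> modulo \<open>2^(k+1)\<close>. Every index class modulo
  \<open>2^(k+1)\<close> contains exactly \<open>m\<close> units, the sets \<open>{-b, b, 2b, 3b}\<close> tile the units, and
  \<open>ind (-1) = 2^k m \<equiv> 2^k\<close>; hence \<open>N q + N (q + 2^k) + N (q - ind 2) + N (q - ind 3) = m\<close> for all \<open>q\<close>.

  The difference \<open>D q = N q - N (q + 2^k)\<close> changes sign under the shift by \<open>2^k\<close>, and the equation
  makes it alternate along multiples of \<open>ind 3 - ind 2\<close>. Unless \<open>ind 3 - ind 2 \<equiv> 2^k\<close> this forces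
  \<open>D = 0\<close>, i.e. \<open>N\<close> has period \<open>2^k\<close>; halving the period again and again (each time by a
  maximum-modulus argument) ends with \<open>4 N 0 = m\<close>, impossible for odd \<open>m\<close>. So
  \<open>ind (-2/3) = ind (-1) + ind 2 - ind 3 \<equiv> 0\<close> modulo \<open>2^(k+1)\<close>, and \<open>(-2/3)^m = 1\<close>.\<close>

lemma cong_double_iff:
  fixes a b M :: int
  shows "[2 * a = 2 * b] (mod 2 * M) \<longleftrightarrow> [a = b] (mod M)"
  by (metis cong_iff_dvd_diff right_diff_distrib dvd_times_left_cancel_iff zero_neq_numeral)

lemma multiple_cong_half_or_zero:
  fixes w :: int
  assumes "\<not> [w = 2^k] (mod 2^Suc k)"
  shows "\<exists>j::nat. even j \<and> [int j * w = 2^k] (mod 2^Suc k) \<or> odd j \<and> [int j * w = 0] (mod 2^Suc k)"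
  using assms
proof (induction k arbitrary: w)
  case 0
  then have "even w" by (simp add: cong_iff_dvd_diff)
  then show ?case by (intro exI[of _ 1]) (simp add: cong_0_iff)
next
  case (Suc k)
  show ?case
  proof (cases "even w")
    case False
    then obtain t where "w = 2 * t + 1" by (meson oddE)
    then have "int (2^Suc k) * w - 2^Suc k = 2^Suc (Suc k) * t" by (simp add: algebra_simps)
    then have "[int (2^Suc k) * w = 2^Suc k] (mod 2^Suc (Suc k))"
      by (simp add: cong_iff_dvd_diff)
    then show ?thesis by (intro exI[of _ "2^Suc k"]) simp
  next
    case True
    then obtain t where t: "w = 2 * t" by blast
    from Suc.prems have "\<not> [t = 2^k] (mod 2^Suc k)"
      using cong_double_iff[of t "2^k" "2^Suc k"] by (simp add: t)
    from Suc.IH[OF this] obtain j :: nat where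
      "even j \<and> [int j * t = 2^k] (mod 2^Suc k) \<or> odd j \<and> [int j * t = 0] (mod 2^Suc k)" by blast
    then have "even j \<and> [2 * (int j * t) = 2 * 2^k] (mod 2 * 2^Suc k) \<or>
               odd j \<and> [2 * (int j * t) = 2 * 0] (mod 2 * 2^Suc k)"
      by (simp only: cong_double_iff)
    then show ?thesis by (intro exI[of _ j]) (simp add: t mult.left_commute)
  qed
qed

lemma periodic_has_max:
  fixes f :: "int \<Rightarrow> 'a::linorder" and T :: int
  assumes periodic: "\<And>a b. [a = b] (mod T) \<Longrightarrow> f a = f b" and "T > 0"
  obtains q where "\<And>a. f a \<le> f q"
proof -
  let ?V = "f ` {0..<T}"
  have fin: "finite ?V" and ne: "?V \<noteq> {}" using \<open>T > 0\<close> by auto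
  obtain q where q: "f q = Max ?V" using Max_in[OF fin ne] by (metis imageE)
  have "f a \<le> f q" for a
  proof -
    have "a mod T \<in> {0..<T}" using \<open>T > 0\<close> by simp
    then have "f (a mod T) \<le> Max ?V" using fin by (intro Max_ge) auto
    moreover have "f a = f (a mod T)" by (rule periodic) (simp add: cong_def)
    ultimately show ?thesis using q by simp
  qed
  then show thesis by (rule that)
qed

lemma cong_diff_half_modulus:
  fixes x q :: int
  assumes "[x = 2^k] (mod 2^Suc k)"
  shows "[q - x = q + 2^k] (mod 2^Suc k)"
proof -
  have "[q - x = q - 2^k] (mod 2^Suc k)" using assms by (intro cong_diff cong_refl)
  moreover have "[q - 2^k = q + 2^k] (mod 2^Suc k)" by (simp add: cong_iff_dvd_diff)
  ultimately show ?thesis by (rule cong_trans)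
qed

lemma alternating_orbit_vanishes:
  fixes F :: "int \<Rightarrow> int" and w r :: int
  assumes periodic: "\<And>a b. [a = b] (mod 2^Suc k) \<Longrightarrow> F a = F b"
    and anti: "F (r + 2^k) = - F r"
    and orbit: "\<And>j::nat. F (r - int j * w) = (-1)^j * F r"
    and "\<not> [w = 2^k] (mod 2^Suc k)"
  shows "F r = 0"
proof -
  obtain j :: nat where
    "even j \<and> [int j * w = 2^k] (mod 2^Suc k) \<or> odd j \<and> [int j * w = 0] (mod 2^Suc k)"
    using multiple_cong_half_or_zero assms(4) by blast
  then consider "even j" "[r - int j * w = r + 2^k] (mod 2^Suc k)"
    | "odd j" "[r - int j * w = r] (mod 2^Suc k)"
  proof (elim disjE conjE)
    assume "even j" and "[int j * w = 2^k] (mod 2^Suc k)"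
    then show thesis using that(1) cong_diff_half_modulus by blast
  next
    assume "odd j" and "[int j * w = 0] (mod 2^Suc k)"
    then have "[r - int j * w = r - 0] (mod 2^Suc k)" by (intro cong_diff cong_refl)
    then show thesis using that(2) \<open>odd j\<close> by simp
  qed
  then show ?thesis
    using orbit[of j] anti by cases (simp_all add: periodic[of "r - int j * w"])
qed

lemma antiperiodic_solution_vanishes:
  fixes D :: "int \<Rightarrow> int" and x y :: int
  assumes periodic: "\<And>a b. [a = b] (mod 2^Suc k) \<Longrightarrow> D a = D b"
    and anti: "\<And>q. D (q + 2^k) = - D q"
    and eq: "\<And>q. 2 * D q + D (q - x) + D (q - y) = 0"
    and "\<not> [x = 2^k] (mod 2^Suc k)"
  shows "D r = 0"
proof (rule ccontr)
  assume "D r \<noteq> 0"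
  have "\<bar>D a\<bar> = \<bar>D b\<bar>" if "[a = b] (mod 2^Suc k)" for a b using periodic[OF that] by simp
  then obtain q0 where q0: "\<And>a. \<bar>D a\<bar> \<le> \<bar>D q0\<bar>"
    by (rule periodic_has_max) auto
  define M where "M = \<bar>D q0\<bar>"
  have bound: "\<bar>D a\<bar> \<le> M" for a using q0 by (simp add: M_def)
  have "M > 0" using bound[of r] \<open>D r \<noteq> 0\<close> by simp
  obtain q where "D q = M"
    using anti[of q0] M_def by (cases "D q0 \<ge> 0") (auto intro: that)
  \<comment> \<open>At a point of maximal modulus the equation forces both shifted values to the opposite extreme.\<close>
  have step: "D (a - x) = - D a" if "\<bar>D a\<bar> = M" for a
    using eq[of a] bound[of "a - x"] bound[of "a - y"] that by linarith
  have "D (q - int j * x) = (-1)^j * D q" for j :: nat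
  proof (induction j)
    case (Suc j)
    have "\<bar>D (q - int j * x)\<bar> = M" using Suc.IH \<open>D q = M\<close> \<open>M > 0\<close> by (simp add: abs_mult)
    then have "D (q - int j * x - x) = - D (q - int j * x)" by (rule step)
    then show ?case using Suc.IH by (simp add: algebra_simps)
  qed simp
  then have "D q = 0" using alternating_orbit_vanishes[where F=D, OF periodic anti] assms(4) by blast
  then show False using \<open>D q = M\<close> \<open>M > 0\<close> by simp
qed

lemma periodic_halve:
  fixes N :: "int \<Rightarrow> 'a"
  assumes periodic: "\<And>a b. [a = b] (mod 2^Suc k) \<Longrightarrow> N a = N b"
    and half: "\<And>q. N (q + 2^k) = N q"
    and "[a = b] (mod 2^k)"
  shows "N a = N b"
proof -
  obtain t where t: "a - b = 2^k * t" using assms(3) by (auto simp: cong_iff_dvd_diff elim: dvdE)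
  show ?thesis
  proof (cases "even t")
    case True
    then have "[a = b] (mod 2^Suc k)" using t by (auto simp: cong_iff_dvd_diff elim!: evenE)
    then show ?thesis by (rule periodic)
  next
    case False
    then have "[a = b + 2^k] (mod 2^Suc k)" using t by (auto simp: cong_iff_dvd_diff algebra_simps elim!: oddE)
    then show ?thesis using periodic half by metis
  qed
qed

lemma half_shift_difference:
  fixes N :: "int \<Rightarrow> int"
  assumes periodic: "\<And>a b. [a = b] (mod 2^Suc k) \<Longrightarrow> N a = N b"
  shows "[a = b] (mod 2^Suc k) \<Longrightarrow> N a - N (a + 2^k) = N b - N (b + 2^k)"
    and "N (q + 2^k) - N (q + 2^k + 2^k) = - (N q - N (q + 2^k))"
proof -
  show "N a - N (a + 2^k) = N b - N (b + 2^k)" if "[a = b] (mod 2^Suc k)"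
    using periodic[OF that] periodic[OF cong_add[OF that cong_refl]] by simp
  have "[q + 2^k + 2^k = q] (mod 2^Suc k)" by (simp add: cong_iff_dvd_diff)
  then show "N (q + 2^k) - N (q + 2^k + 2^k) = - (N q - N (q + 2^k))" using periodic by simp
qed

lemma no_periodic_odd_solution:
  fixes N :: "int \<Rightarrow> int" and x y m :: int
  assumes "\<And>a b. [a = b] (mod 2^k) \<Longrightarrow> N a = N b"
    and "\<And>q. 2 * N q + N (q - x) + N (q - y) = m"
    and "odd m"
  shows False
  using assms
proof (induction k arbitrary: N)
  case 0
  then have "N (- x) = N 0" "N (- y) = N 0" by simp_all
  then have "4 * N 0 = m" using "0.prems"(2)[of 0] by simp
  then show False using \<open>odd m\<close> by presburger
next
  case (Suc k)
  note periodic = Suc.prems(1) and eq = Suc.prems(2)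
  show False
  proof (cases "[x = 2^k] (mod 2^Suc k) \<and> [y = 2^k] (mod 2^Suc k)")
    case True
    then have "N (0 - x) = N (0 + 2^k)" "N (0 - y) = N (0 + 2^k)"
      using periodic cong_diff_half_modulus by blast+
    then have "2 * (N 0 + N (2^k)) = m" using eq[of 0] by simp
    then show False using \<open>odd m\<close> by presburger
  next
    case False
    define D where "D q = N q - N (q + 2^k)" for q
    have perD: "[a = b] (mod 2^Suc k) \<Longrightarrow> D a = D b" for a b
      unfolding D_def by (rule half_shift_difference(1)[OF periodic])
    have antiD: "D (q + 2^k) = - D q" for q
      unfolding D_def by (rule half_shift_difference(2)[OF periodic])
    have eqD: "2 * D q + D (q - x) + D (q - y) = 0" for q
      using eq[of q] eq[of "q + 2^k"] by (simp add: D_def algebra_simps)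
    have "D q = 0" for q
      using antiperiodic_solution_vanishes[where D=D, OF perD antiD eqD]
        antiperiodic_solution_vanishes[where D=D and x=y and y=x, OF perD antiD] eqD False
      by (metis add.commute add.left_commute)
    then have "N (q + 2^k) = N q" for q by (simp add: D_def)
    then have "N a = N b" if "[a = b] (mod 2^k)" for a b
      using periodic_halve[where N=N, OF periodic] that by blast
    then show False using Suc.IH eq \<open>odd m\<close> by blast
  qed
qed

lemma periodic_odd_sum_shift_cong:
  fixes N :: "int \<Rightarrow> int" and u v m :: int
  assumes periodic: "\<And>a b. [a = b] (mod 2^Suc k) \<Longrightarrow> N a = N b"
    and eq: "\<And>q. N q + N (q + 2^k) + N (q - u) + N (q - v) = m"
    and "odd m"
  shows "[v - u = 2^k] (mod 2^Suc k)"
proof (rule ccontr)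
  assume shift: "\<not> [v - u = 2^k] (mod 2^Suc k)"
  define D where "D q = N q - N (q + 2^k)" for q
  have perD: "[a = b] (mod 2^Suc k) \<Longrightarrow> D a = D b" for a b
    unfolding D_def by (rule half_shift_difference(1)[OF periodic])
  have antiD: "D (q + 2^k) = - D q" for q
    unfolding D_def by (rule half_shift_difference(2)[OF periodic])
  have eqD: "D (q - u) + D (q - v) = 0" for q
    using eq[of q] eq[of "q + 2^k"] antiD[of q] by (simp add: D_def algebra_simps)
  have orbit: "D (r - int j * (v - u)) = (-1)^j * D r" for r and j :: nat
  proof (induction j)
    case (Suc j)
    have "D (r - int j * (v - u) - (v - u)) = - D (r - int j * (v - u))"
      using eqD[of "r - int j * (v - u) + u"] by (simp add: algebra_simps)
    then show ?case using Suc.IH by (simp add: algebra_simps)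
  qed simp
  have "D r = 0" for r
    using alternating_orbit_vanishes[where F=D, OF perD antiD orbit shift] .
  then have half: "N (q + 2^k) = N q" for q by (simp add: D_def)
  have "N a = N b" if "[a = b] (mod 2^k)" for a b
    using periodic_halve[where N=N, OF periodic half that] .
  moreover have "2 * N q + N (q - u) + N (q - v) = m" for q
    using eq[of q] half[of q] by simp
  ultimately show False using no_periodic_odd_solution \<open>odd m\<close> by blast
qed

lemma card_cong_class_lessThan:
  fixes K m :: nat and q :: int
  assumes K: "K > 0"
  shows "card {i \<in> {..<K * m}. [int i = q] (mod int K)} = m"
proof -
  define r where "r = nat (q mod int K)"
  have r: "int r = q mod int K" "r < K" using K by (simp_all add: r_def nat_less_iff)
  have "{i \<in> {..<K * m}. [int i = q] (mod int K)} = (\<lambda>t. r + K * t) ` {..<m}"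
  proof (intro equalityI subsetI)
    fix i assume i: "i \<in> {i \<in> {..<K * m}. [int i = q] (mod int K)}"
    then have "int i mod int K = q mod int K" by (simp add: cong_def)
    then have "i mod K = r" using r by (metis of_nat_eq_iff zmod_int)
    then have "i = r + K * (i div K)" by (metis mod_div_mult_eq mult.commute add.commute)
    moreover have "i div K < m" using i K by (simp add: less_mult_imp_div_less mult.commute)
    ultimately show "i \<in> (\<lambda>t. r + K * t) ` {..<m}" by blast
  next
    fix i assume "i \<in> (\<lambda>t. r + K * t) ` {..<m}"
    then obtain t where t: "t < m" "i = r + K * t" by blast
    have "r + K * t < K * (t + 1)" using r by simp
    also have "\<dots> \<le> K * m" using t by (intro mult_le_mono2) simp
    finally have "i < K * m" using t by simp
    moreover have "int i mod int K = q mod int K"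
      using t r K by (simp add: zmod_int[symmetric])
    ultimately show "i \<in> {i \<in> {..<K * m}. [int i = q] (mod int K)}" by (simp add: cong_def)
  qed
  moreover have "inj_on (\<lambda>t. r + K * t) {..<m}" using K by (auto simp: inj_on_def)
  ultimately show ?thesis by (simp add: card_image)
qed

locale prime_primroot =
  fixes p g :: nat
  assumes prime: "prime p" and primroot: "residue_primroot p g"
begin

lemma gt_1: "p > 1"
  using prime prime_gt_1_nat by blast

lemma bij_betw_power: "bij_betw (\<lambda>i. g ^ i mod p) {..<p - 1} {0<..<p}"
  using residue_primroot_is_generator[OF gt_1 primroot] totient_prime[OF prime] totatives_prime[OF prime]
  by simp

lemma power_cong_iff: "[int g ^ i = int g ^ j] (mod int p) \<longleftrightarrow> [i = j] (mod p - 1)"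
proof -
  have "coprime p g" "ord p g = p - 1"
    using primroot totient_prime[OF prime] by (simp_all add: residue_primroot_def)
  then show ?thesis using order_divides_expdiff by (metis cong_int_iff of_nat_power)
qed

text \<open>Discrete logarithm to base \<open>g\<close>; its value is junk when \<open>p\<close> divides \<open>a\<close>.\<close>

definition dlog :: "int \<Rightarrow> nat" where
  "dlog a = inv_into {..<p - 1} (\<lambda>i. g ^ i mod p) (nat (a mod int p))"

lemma residue_in_units: "\<not> int p dvd a \<Longrightarrow> nat (a mod int p) \<in> {0<..<p}"
proof -
  assume "\<not> int p dvd a"
  then have "a mod int p \<noteq> 0" by (simp add: dvd_eq_mod_eq_0)
  moreover have "0 \<le> a mod int p" "a mod int p < int p" using gt_1 by simp_all
  ultimately show ?thesis by auto
qed

lemma dlog_less: "\<not> int p dvd a \<Longrightarrow> dlog a < p - 1"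
  using bij_betw_inv_into[OF bij_betw_power] residue_in_units unfolding dlog_def
  by (meson bij_betwE lessThan_iff)

lemma power_dlog_cong: "\<not> int p dvd a \<Longrightarrow> [int g ^ dlog a = a] (mod int p)"
proof -
  assume "\<not> int p dvd a"
  then have "g ^ dlog a mod p = nat (a mod int p)"
    unfolding dlog_def by (rule bij_betw_inv_into_right[OF bij_betw_power residue_in_units])
  then have "int (g ^ dlog a mod p) = a mod int p"
    using gt_1 by simp
  then have "int g ^ dlog a mod int p = a mod int p"
    by (simp add: of_nat_mod)
  then show ?thesis by (simp add: cong_def)
qed

lemma dlog_eqI: "\<not> int p dvd a \<Longrightarrow> [int g ^ i = a] (mod int p) \<Longrightarrow> [dlog a = i] (mod p - 1)"
  using power_dlog_cong power_cong_iff by (metis cong_sym cong_trans)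

lemma dlog_cong: "[a = b] (mod int p) \<Longrightarrow> dlog a = dlog b"
  by (simp add: dlog_def cong_def)

lemma dlog_mult:
  assumes "\<not> int p dvd a" "\<not> int p dvd b"
  shows "[dlog (a * b) = dlog a + dlog b] (mod p - 1)"
proof (rule dlog_eqI)
  show "\<not> int p dvd a * b" using assms prime by (simp add: prime_dvd_mult_iff)
  show "[int g ^ (dlog a + dlog b) = a * b] (mod int p)"
    unfolding power_add using assms by (intro cong_mult power_dlog_cong)
qed

lemma dlog_one: "dlog 1 = 0"
proof -
  have "\<not> int p dvd 1" using gt_1 by simp
  then have "[dlog 1 = 0] (mod p - 1)" "dlog 1 < p - 1"
    using dlog_eqI[of 1 0] dlog_less[of 1] by simp_all
  then show ?thesis by (simp add: cong_def)
qed

lemma dlog_minus_one: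
  assumes "odd p"
  shows "dlog (-1) = (p - 1) div 2"
proof -
  have p2: "p > 2" using gt_1 assms by presburger
  have nd: "\<not> int p dvd -1" using gt_1 by simp
  have "[dlog (-1) + dlog (-1) = 0] (mod p - 1)"
    using dlog_mult[OF nd nd] dlog_one by (simp add: cong_sym_eq)
  then have "(p - 1) dvd 2 * dlog (-1)" by (simp add: cong_0_iff mult_2)
  moreover have "dlog (-1) \<noteq> 0"
  proof
    assume "dlog (-1) = 0"
    then have "[1 = -1] (mod int p)" using power_dlog_cong[OF nd] by simp
    then show False using p2 by (simp add: cong_iff_dvd_diff zdvd_not_zless)
  qed
  moreover have "2 * dlog (-1) < 2 * (p - 1)" using dlog_less[OF nd] by simp
  ultimately obtain c where c: "2 * dlog (-1) = (p - 1) * c" and "c \<noteq> 0" and "c < 2"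
    by (metis dvdE mult.commute mult_0_right mult_less_cancel1 mult_eq_0_iff zero_neq_numeral)
  then have "c = 1" by linarith
  then show ?thesis using c by simp
qed

lemma dlog_minus_one_cong:
  assumes p: "p - 1 = 2^Suc k * m" and "odd m"
  shows "[int (dlog (-1)) = 2^k] (mod 2^Suc k)"
proof -
  have "odd p" using p gt_1 by (cases p) auto
  obtain t where "m = 2 * t + 1" using \<open>odd m\<close> by (elim oddE)
  moreover have "dlog (-1) = 2^k * m" using dlog_minus_one[OF \<open>odd p\<close>] p by simp
  ultimately have "int (dlog (-1)) - 2^k = 2^Suc k * int t" by (simp add: algebra_simps)
  then show ?thesis unfolding cong_iff_dvd_diff by simp
qed

lemma dlog_mult_cong:
  assumes "[b * a = c] (mod int p)" "\<not> int p dvd b" "\<not> int p dvd c"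
  shows "[int (dlog b) + int (dlog a) = int (dlog c)] (mod int (p - 1))"
proof -
  have "\<not> int p dvd a"
    using assms by (metis cong_dvd_iff dvd_mult)
  have "dlog c = dlog (b * a)" using assms(1) by (intro dlog_cong) (rule cong_sym)
  then have "[dlog b + dlog a = dlog c] (mod p - 1)"
    using dlog_mult[OF assms(2) \<open>\<not> int p dvd a\<close>] by (simp add: cong_sym_eq)
  then show ?thesis by (simp flip: cong_int_iff)
qed

lemma bij_betw_dlog: "bij_betw (\<lambda>y. dlog (int y)) {0<..<p} {..<p - 1}"
proof -
  have "dlog (int y) = inv_into {..<p - 1} (\<lambda>i. g ^ i mod p) y" if "y \<in> {0<..<p}" for y
    using that by (simp add: dlog_def)
  then have "bij_betw (\<lambda>y. dlog (int y)) {0<..<p} {..<p - 1} =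
             bij_betw (inv_into {..<p - 1} (\<lambda>i. g ^ i mod p)) {0<..<p} {..<p - 1}"
    by (rule bij_betw_cong)
  then show ?thesis using bij_betw_inv_into[OF bij_betw_power] by simp
qed

lemma card_dlog_class:
  assumes "d dvd p - 1"
  shows "card {y \<in> {0<..<p}. [int (dlog (int y)) = q] (mod int d)} = (p - 1) div d"
proof -
  let ?Y = "{y \<in> {0<..<p}. [int (dlog (int y)) = q] (mod int d)}"
  let ?I = "{i. [int i = q] (mod int d)}"
  have "d > 0" using assms gt_1 by (intro gr0I) simp
  have "(\<lambda>y. dlog (int y)) ` ?Y = (\<lambda>y. dlog (int y)) ` {0<..<p} \<inter> ?I" by blast
  also have "\<dots> = {..<d * ((p - 1) div d)} \<inter> ?I"
    using bij_betw_dlog assms by (simp add: bij_betw_def)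
  finally have image: "(\<lambda>y. dlog (int y)) ` ?Y = {i \<in> {..<d * ((p - 1) div d)}. [int i = q] (mod int d)}"
    by blast
  have "inj_on (\<lambda>y. dlog (int y)) ?Y"
    using bij_betw_dlog unfolding bij_betw_def by (rule inj_on_subset[OF conjunct1]) blast
  then have "card ?Y = card ((\<lambda>y. dlog (int y)) ` ?Y)" by (simp add: card_image)
  also have "\<dots> = card {i \<in> {..<d * ((p - 1) div d)}. [int i = q] (mod int d)}"
    by (simp only: image)
  also have "\<dots> = (p - 1) div d" using \<open>d > 0\<close> by (rule card_cong_class_lessThan)
  finally show ?thesis .
qed

lemma ord_dvd_if_dvd_dlog:
  assumes "\<not> p dvd x" "d dvd p - 1" "d dvd dlog (int x)"
  shows "ord p x dvd (p - 1) div d"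
proof -
  have x: "\<not> int p dvd int x" using assms(1) by simp
  obtain c where c: "dlog (int x) = d * c" using assms(3) by blast
  have "dlog (int x) * ((p - 1) div d) = c * (d * ((p - 1) div d))" using c by (simp add: mult_ac)
  also have "\<dots> = c * (p - 1)" using assms(2) by simp
  finally have exp: "dlog (int x) * ((p - 1) div d) = c * (p - 1)" .
  have "[int x ^ ((p - 1) div d) = (int g ^ dlog (int x)) ^ ((p - 1) div d)] (mod int p)"
    using power_dlog_cong[OF x] by (intro cong_pow) (rule cong_sym)
  also have "(int g ^ dlog (int x)) ^ ((p - 1) div d) = int g ^ (c * (p - 1))"
    by (simp only: exp flip: power_mult)
  also have "[int g ^ (c * (p - 1)) = int g ^ 0] (mod int p)"
    by (simp only: power_cong_iff) (simp add: cong_0_iff)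
  finally have "[x ^ ((p - 1) div d) = 1] (mod p)" by (metis cong_int_iff of_nat_1 of_nat_power power_0)
  then show ?thesis by (simp add: ord_divides')
qed

lemma sum_card_dlog_class:
  fixes A :: "int set" and B :: "nat set"
  assumes bij: "bij_betw (\<lambda>(a, b). nat ((a * int b) mod int p)) (A \<times> B) {0<..<p}"
    and "finite A" "finite B" "d dvd p - 1"
  shows "(\<Sum>a\<in>A. card {b \<in> B. [int (dlog (int b)) = q - int (dlog a)] (mod int d)}) = (p - 1) div d"
proof -
  define f where "f = (\<lambda>(a, b). nat ((a * int b) mod int p))"
  define Y where "Y = {y \<in> {0<..<p}. [int (dlog (int y)) = q] (mod int d)}"
  define C where "C a = {b \<in> B. [int (dlog (int b)) = q - int (dlog a)] (mod int d)}" for a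
  have in_Y_iff: "f (a, b) \<in> Y \<longleftrightarrow> b \<in> C a" if ab: "a \<in> A" "b \<in> B" for a b
  proof -
    have "f (a, b) \<in> {0<..<p}" using bij ab unfolding bij_betw_def f_def by blast
    then have f_int: "int (f (a, b)) = a * int b mod int p" and "\<not> int p dvd a * int b"
      using gt_1 by (auto simp: f_def dvd_eq_mod_eq_0)
    then have "\<not> int p dvd a" "\<not> int p dvd int b" by auto
    then have "[dlog (a * int b) = dlog a + dlog b] (mod d)"
      using dlog_mult cong_dvd_modulus_nat assms(4) by blast
    moreover have "dlog (int (f (a, b))) = dlog (a * int b)" unfolding f_int by (rule dlog_cong) simp
    ultimately have "[int (dlog (int (f (a, b)))) = int (dlog a) + int (dlog b)] (mod int d)"
      by (simp flip: cong_int_iff)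
    then have "[int (dlog (int (f (a, b)))) = q] (mod int d) \<longleftrightarrow> [int (dlog a) + int (dlog b) = q] (mod int d)"
      by (meson cong_sym cong_trans)
    also have "\<dots> \<longleftrightarrow> [int (dlog b) = q - int (dlog a)] (mod int d)"
      by (simp add: cong_iff_dvd_diff algebra_simps)
    finally show ?thesis using \<open>f (a, b) \<in> {0<..<p}\<close> ab by (simp add: Y_def C_def)
  qed
  have "bij_betw f (SIGMA a:A. C a) Y"
  proof (rule bij_betw_subset[OF bij[folded f_def]])
    show "(SIGMA a:A. C a) \<subseteq> A \<times> B" by (auto simp: C_def)
    have "Y \<subseteq> f ` (A \<times> B)" using bij unfolding bij_betw_def f_def Y_def by blast
    then show "f ` (SIGMA a:A. C a) = Y" using in_Y_iff by (fastforce simp: C_def)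
  qed
  then have "card (SIGMA a:A. C a) = card Y" by (rule bij_betw_same_card)
  then show ?thesis
    using card_dlog_class[OF assms(4)] \<open>finite A\<close> \<open>finite B\<close> by (simp add: Y_def C_def)
qed

end

lemma perfect_B_m1_3_bij_betw:
  assumes "perfect_B_m1_3 p B"
  shows "bij_betw (\<lambda>(a, b). nat ((a * int b) mod int p)) ({-1, 1, 2, 3} \<times> B) {0<..<p}"
proof -
  let ?A = "{-1, 1, 2, 3 :: int}"
  let ?f = "\<lambda>(a, b). nat ((a * int b) mod int p)"
  have B: "B \<subseteq> {0..<p}"
    and unique: "\<forall>y\<in>{1..<p}. \<exists>!(a, b). a \<in> ?A \<and> b \<in> B \<and> (a * int b) mod int p = int y"
    and no_zero: "\<not> (\<exists>a\<in>?A. \<exists>b\<in>B. (a * int b) mod int p = 0)"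
    using assms unfolding perfect_B_m1_3_def by simp_all
  have nonzero: "(a * int b) mod int p \<noteq> 0" if "a \<in> ?A" "b \<in> B" for a b
    using no_zero that by (meson bexI)
  have f_int: "int (nat ((a * int b) mod int p)) = (a * int b) mod int p"
    and f_unit: "nat ((a * int b) mod int p) \<in> {0<..<p}"
    if "a \<in> ?A" "b \<in> B" for a b
  proof -
    have "p > 0" using B that(2) by auto
    then show "int (nat ((a * int b) mod int p)) = (a * int b) mod int p" by simp
    moreover have "0 \<le> (a * int b) mod int p" "(a * int b) mod int p < int p"
      using \<open>p > 0\<close> by simp_all
    ultimately show "nat ((a * int b) mod int p) \<in> {0<..<p}" using nonzero[OF that] by auto
  qed
  show ?thesis
    unfolding bij_betw_def
  proof
    show "inj_on ?f (?A \<times> B)"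
    proof (rule inj_onI, clarify)
      fix a b a' b'
      assume ab: "a \<in> ?A" "b \<in> B" and ab': "a' \<in> ?A" "b' \<in> B"
        and eq: "nat ((a * int b) mod int p) = nat ((a' * int b') mod int p)"
      define y where "y = nat ((a * int b) mod int p)"
      have "y \<in> {1..<p}" using f_unit[OF ab] by (auto simp: y_def)
      moreover have "(a * int b) mod int p = int y"
        unfolding y_def using f_int[OF ab] by (rule sym)
      moreover have "(a' * int b') mod int p = int y"
        unfolding y_def eq using f_int[OF ab'] by (rule sym)
      ultimately obtain z where
        "\<And>w. (case w of (a, b) \<Rightarrow> a \<in> ?A \<and> b \<in> B \<and> (a * int b) mod int p = int y) \<Longrightarrow> w = z"
        and "(a * int b) mod int p = int y" "(a' * int b') mod int p = int y"
        using unique by (metis (no_types, lifting) ex1E)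
      then have "(a, b) = z" "(a', b') = z" using ab ab' by auto
      then show "a = a' \<and> b = b'" by (metis prod.inject)
    qed
    show "?f ` (?A \<times> B) = {0<..<p}"
    proof (intro equalityI subsetI)
      fix y assume "y \<in> ?f ` (?A \<times> B)"
      then obtain a b where ab: "a \<in> ?A" "b \<in> B" and "y = nat ((a * int b) mod int p)"
        by (auto simp only: image_iff mem_Sigma_iff split: prod.splits)
      then show "y \<in> {0<..<p}" using f_unit[OF ab] by (simp only:)
    next
      fix y assume "y \<in> {0<..<p}"
      then obtain a b where "a \<in> ?A" "b \<in> B" "(a * int b) mod int p = int y"
        using ex1_implies_ex[OF bspec[OF unique, of y]] by auto
      then show "y \<in> ?f ` (?A \<times> B)" by (intro image_eqI[of _ _ "(a, b)"]) auto
    qed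
  qed
qed

lemma even_decompose_two_power:
  fixes n :: nat
  assumes "even n" "n > 0"
  obtains k m where "n = 2^Suc k * m" "odd m"
proof -
  obtain m where n: "n = 2 ^ multiplicity 2 n * m" and "odd m"
    using multiplicity_decompose'[of n 2] assms(2) by auto
  have "multiplicity 2 n \<noteq> 0" using assms(1) n \<open>odd m\<close> by (metis mult_1 power_0)
  then obtain k where "multiplicity 2 n = Suc k" using not0_implies_Suc by blast
  with n have "n = 2^Suc k * m" by simp
  with \<open>odd m\<close> show thesis by (intro that)
qed

lemma not_dvd_small:
  fixes a :: int
  assumes "p > 3" "a \<noteq> 0" "\<bar>a\<bar> \<le> 3"
  shows "\<not> int p dvd a"
proof
  assume "int p dvd a"
  then have "int p \<le> \<bar>a\<bar>" using assms(2) by (intro zdvd_imp_le) auto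
  then show False using assms by linarith
qed

context prime_primroot
begin

text \<open>\<open>dlog_count B d\<close> is the function \<open>N\<close> of the outline above, for the modulus \<open>d = 2^(k+1)\<close>.\<close>

definition dlog_count :: "nat set \<Rightarrow> int \<Rightarrow> int \<Rightarrow> int" where
  "dlog_count B d q = int (card {b \<in> B. [int (dlog (int b)) = q] (mod d)})"

lemma dlog_count_cong: "[q = r] (mod d) \<Longrightarrow> dlog_count B d q = dlog_count B d r"
  unfolding dlog_count_def by (metis (no_types, opaque_lifting) cong_sym cong_trans)

lemma perfect_B_m1_3_balance:
  assumes "perfect_B_m1_3 p B" and p: "p - 1 = 2^Suc k * m" "odd m"
  shows "dlog_count B (2^Suc k) q + dlog_count B (2^Suc k) (q + 2^k)
    + dlog_count B (2^Suc k) (q - int (dlog 2)) + dlog_count B (2^Suc k) (q - int (dlog 3)) = int m"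
proof -
  have finite: "finite B" using assms(1) finite_subset unfolding perfect_B_m1_3_def by blast
  have "[q - int (dlog (-1)) = q + 2^k] (mod 2^Suc k)"
    using dlog_minus_one_cong[OF p] by (rule cong_diff_half_modulus)
  then have "dlog_count B (2^Suc k) (q - int (dlog (-1))) = dlog_count B (2^Suc k) (q + 2^k)"
    by (rule dlog_count_cong)
  moreover have "(\<Sum>a\<in>{-1, 1, 2, 3}. dlog_count B (2^Suc k) (q - int (dlog a))) = int m"
    using sum_card_dlog_class[OF perfect_B_m1_3_bij_betw[OF assms(1)], of "2^Suc k" q] finite p
    by (simp add: dlog_count_def)
  ultimately show ?thesis by (simp add: dlog_one algebra_simps)
qed

lemma dlog_minus_two_thirds_dvd:
  assumes p: "p - 1 = 2^Suc k * m" "odd m" and "p > 3"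
    and x: "[int (3 * x) = -2] (mod int p)"
    and shift: "[int (dlog 3) - int (dlog 2) = 2^k] (mod 2^Suc k)"
  shows "2^Suc k dvd dlog (int x)"
proof -
  have units: "\<not> int p dvd a" if "a \<in> {-2, -1, 2, 3}" for a
    using that by (intro not_dvd_small[OF \<open>p > 3\<close>]) auto
  have "[int (dlog 3) + int (dlog x) = int (dlog (-2))] (mod int (p - 1))"
    using x by (intro dlog_mult_cong units) simp_all
  moreover have "[int (dlog (-1)) + int (dlog 2) = int (dlog (-2))] (mod int (p - 1))"
    by (intro dlog_mult_cong units) simp_all
  ultimately have "[int (dlog 3) + int (dlog x) = int (dlog (-1)) + int (dlog 2)] (mod int (p - 1))"
    by (rule cong_trans[OF _ cong_sym])
  moreover have "(2::int)^Suc k dvd int (p - 1)" using p by simp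
  ultimately have "[int (dlog 3) + int (dlog x) = int (dlog (-1)) + int (dlog 2)] (mod 2^Suc k)"
    by (rule cong_dvd_modulus)
  moreover note shift dlog_minus_one_cong[OF p]
  ultimately have "(2::int)^Suc k dvd (int (dlog 3) + int (dlog x) - (int (dlog (-1)) + int (dlog 2)))
      - (int (dlog 3) - int (dlog 2) - 2^k) + (int (dlog (-1)) - 2^k)"
    unfolding cong_iff_dvd_diff by (rule dvd_add[OF dvd_diff])
  then have "(2::int)^Suc k dvd int (dlog x)" by simp
  then show ?thesis by (metis int_dvd_int_iff of_nat_numeral of_nat_power)
qed

end

theorem lemma4p5:
  fixes p :: nat and B :: "nat set" and x :: nat
  assumes "prime p" and "odd p" and "[p = 1] (mod 4)"
    and "perfect_B_m1_3 p B"
    and "[int (3 * x) = -2] (mod int p)"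
  shows "odd (ord p x)"
proof -
  have "p mod 4 = 1" using assms(3) by (simp add: cong_def)
  with prime_gt_1_nat[OF assms(1)] have "p > 3" by presburger
  obtain g where "residue_primroot p g"
    using prime_primitive_root_exists[OF prime_gt_1_nat assms(1)] assms(1) by blast
  interpret prime_primroot p g using assms(1) \<open>residue_primroot p g\<close> by unfold_locales
  obtain k m where p: "p - 1 = 2^Suc k * m" and "odd m"
    using even_decompose_two_power[of "p - 1"] assms(2) \<open>p > 3\<close> by auto
  have "[int (dlog 3) - int (dlog 2) = 2^k] (mod 2^Suc k)"
    using periodic_odd_sum_shift_cong[where N="dlog_count B (2^Suc k)"] dlog_count_cong
      perfect_B_m1_3_balance[OF assms(4) p \<open>odd m\<close>] \<open>odd m\<close> by simp
  then have "2^Suc k dvd dlog (int x)"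
    using dlog_minus_two_thirds_dvd[OF p \<open>odd m\<close> \<open>p > 3\<close> assms(5)] by blast
  moreover have "\<not> p dvd x"
  proof
    assume "p dvd x"
    then have "int p dvd -2" using cong_dvd_iff[OF assms(5)] by simp
    then show False using not_dvd_small[OF \<open>p > 3\<close>, of "-2"] by simp
  qed
  ultimately have "ord p x dvd m" using ord_dvd_if_dvd_dlog[of x "2^Suc k"] p by simp
  then show ?thesis using \<open>odd m\<close> by (meson dvd_trans)
qed

end
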